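(* Let $n$ be a positive odd integer and $m>1$ an odd integer, and define \[ S(n,m)=\sum_{j=0}^{(n-1)/2}(-1)^j\sin\frac{\pi(2j+1)}{2n}\Bigl(\cos\frac{\pi(2j+1)}{2n}\Bigr)^{m-1}. \] Then \[ \int_0^1\frac{\sin\bigl(n\sin^{-1}\sqrt t\bigr)\sinh\bigl(n\sinh^{-1}\sqrt t\bigr)}{\cos\bigl(2n\sin^{-1}\sqrt t\bigr)+\cosh\bigl(2n\sinh^{-1}\sqrt t\bigr)}\cdot\frac{\sin\bigl(m\sin^{-1}t\bigr)}{\sqrt{1-t^2}}\,dt=\frac{\pi}{4n}S(n,m). \] *)

theory Defs
  imports "HOL-Analysis.Analysis"
begin

definition S :: "nat \<Rightarrow> nat \<Rightarrow> real" where
  "S n m = (\<Sum>j=0..(n - 1) div 2. (-1::real)^j * sin (pi * (2 * real j + 1) / (2 * real n))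
              * (cos (pi * (2 * real j + 1) / (2 * real n))) ^ (m - 1))"

end

theory Submission
  imports Defs "HOL-Computational_Algebra.Polynomial"
begin

(* Put t = sin theta. Since cos (arcsin (sqrt t) + i arsinh (sqrt t)) = e^(-i theta), the first
   factor of the integrand is Im (1 / T_n (e^(-i theta))) / 2, with T_n the Chebyshev polynomial.
   Expanding 1 / T_n in partial fractions over its simple roots cos phi_k, phi_k = pi (2k+1) / (2n),
   turns this factor into a combination of the kernels sin theta / (1 - 2 c cos theta + c^2)
   with c = cos phi_k. Their sine moments over [0, pi] equal pi/2 c^(m-1), by a three-term
   recurrence in m. For odd n and m the symmetry phi_k -> pi - phi_k folds the integrals over
   [0, pi/2] into integrals over [0, pi], and the remaining finite sum is 2 S(n, m). *)

definition poisson_denom :: "real \<Rightarrow> real \<Rightarrow> real" where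
  "poisson_denom c x = 1 - 2 * c * cos x + c^2"

lemma poisson_denom_eq_sum_squares: "poisson_denom c x = (1 - c * cos x)^2 + (c * sin x)^2"
proof -
  have "(c * sin x)^2 = c^2 - (c * cos x)^2"
    by (simp add: power_mult_distrib sin_squared_eq algebra_simps)
  then show ?thesis
    unfolding poisson_denom_def by (simp add: power2_eq_square algebra_simps)
qed

lemma poisson_denom_eq_sum_squares': "poisson_denom c x = (cos x - c)^2 + (sin x)^2"
  unfolding poisson_denom_def by (simp add: sin_squared_eq power2_eq_square algebra_simps)

lemma one_minus_mult_cos_pos:
  fixes c x :: real
  assumes "\<bar>c\<bar> < 1" shows "1 - c * cos x > 0"
proof -
  have "\<bar>c * cos x\<bar> \<le> \<bar>c\<bar>" by (simp add: abs_mult mult_left_le)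
  with assms show ?thesis by linarith
qed

lemma poisson_denom_pos:
  fixes c x :: real
  assumes "\<bar>c\<bar> < 1" shows "poisson_denom c x > 0"
  using one_minus_mult_cos_pos[OF assms, of x]
  unfolding poisson_denom_eq_sum_squares by (simp add: add_pos_nonneg)

lemma continuous_on_poisson_denom [continuous_intros]: "continuous_on U (poisson_denom c)"
  unfolding poisson_denom_def by (intro continuous_intros)

lemma has_real_derivative_poisson_arctan:
  assumes c: "\<bar>c\<bar> < 1"
  shows "((\<lambda>x. x + 2 * arctan (c * sin x / (1 - c * cos x)))
           has_real_derivative (1 - c^2) / poisson_denom c x) (at x within U)"
proof -
  define q where "q = 1 - c * cos x"
  have q: "q \<noteq> 0" using one_minus_mult_cos_pos[OF c, of x] by (simp add: q_def)
  have D: "poisson_denom c x \<noteq> 0" using poisson_denom_pos[OF c, of x] by simp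
  have "((\<lambda>x. c * sin x / (1 - c * cos x)) has_real_derivative
          (c * cos x * q - (c * sin x)^2) / q^2) (at x within U)"
    using q unfolding q_def by (auto intro!: derivative_eq_intros simp: power2_eq_square)
  from DERIV_arctan[THEN DERIV_chain2, OF this]
  have deriv: "((\<lambda>x. x + 2 * arctan (c * sin x / (1 - c * cos x))) has_real_derivative
          1 + 2 * (inverse (1 + (c * sin x / (1 - c * cos x))^2) * ((c * cos x * q - (c * sin x)^2) / q^2)))
          (at x within U)"
    by (rule DERIV_add[OF DERIV_ident DERIV_cmult])
  have inv: "inverse (1 + (c * sin x / (1 - c * cos x))^2) * ((c * cos x * q - (c * sin x)^2) / q^2)
      = (c * cos x * q - (c * sin x)^2) / poisson_denom c x"
  proof -
    have "1 + (c * sin x / (1 - c * cos x))^2 = poisson_denom c x / q^2"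
      unfolding poisson_denom_eq_sum_squares q_def[symmetric] using q by (simp add: field_simps)
    then show ?thesis using q D by simp
  qed
  have "poisson_denom c x + 2 * (c * cos x * q - (c * sin x)^2) = 1 - c^2"
    unfolding poisson_denom_def q_def using sin_cos_squared_add[of x] by algebra
  then have "1 + 2 * ((c * cos x * q - (c * sin x)^2) / poisson_denom c x) = (1 - c^2) / poisson_denom c x"
    using D by (simp add: field_simps)
  with deriv show ?thesis unfolding inv by simp
qed

lemma has_integral_real_antiderivative:
  fixes F f :: "real \<Rightarrow> real"
  assumes "a \<le> b" and "\<And>x. x \<in> {a..b} \<Longrightarrow> (F has_real_derivative f x) (at x within {a..b})"
  shows "(f has_integral F b - F a) {a..b}"
  using assms by (intro fundamental_theorem_of_calculus)
    (auto simp: has_real_derivative_iff_has_vector_derivative[symmetric])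

lemma has_integral_sin_mult_sin:
  assumes "m \<ge> 1"
  shows "((\<lambda>x. sin x * sin (real m * x)) has_integral (if m = 1 then pi/2 else 0)) {0..pi}"
proof (cases "m = 1")
  case True
  have "((\<lambda>x. (x - sin (2 * x) / 2) / 2) has_real_derivative sin x * sin (real m * x)) (at x within U)"
    for x U
  proof -
    have "(1 - cos (2 * x)) / 2 = sin x * sin x" by (simp add: cos_double_sin power2_eq_square)
    then show ?thesis using True by (auto intro!: derivative_eq_intros)
  qed
  from has_integral_real_antiderivative[of 0 pi, OF _ this] True show ?thesis by simp
next
  case False
  with assms have m: "real m - 1 \<noteq> 0" "real m + 1 \<noteq> 0" by auto
  have deriv: "((\<lambda>x. (sin ((real m - 1) * x) / (real m - 1) - sin ((real m + 1) * x) / (real m + 1)) / 2)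
          has_real_derivative sin x * sin (real m * x)) (at x within U)" for x U
  proof -
    have "(cos ((real m - 1) * x) - cos ((real m + 1) * x)) / 2 = sin x * sin (real m * x)"
      by (simp add: algebra_simps cos_add cos_diff)
    then show ?thesis using m by (auto intro!: derivative_eq_intros)
  qed
  have "sin ((real m - 1) * pi) = 0" "sin ((real m + 1) * pi) = 0"
    using sin_npi[of "m - 1"] sin_npi[of "m + 1"] assms by (simp_all add: of_nat_diff add.commute)
  with has_integral_real_antiderivative[of 0 pi, OF _ deriv] False show ?thesis by simp
qed

definition poisson_sine_kernel :: "real \<Rightarrow> nat \<Rightarrow> real \<Rightarrow> real" where
  "poisson_sine_kernel c m x = sin x / poisson_denom c x * sin (real m * x)"

lemma continuous_on_poisson_sine_kernel [continuous_intros]: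
  assumes "\<bar>c\<bar> < 1" shows "continuous_on U (poisson_sine_kernel c m)"
proof -
  have "poisson_denom c x \<noteq> 0" for x using poisson_denom_pos[OF assms, of x] by simp
  then show ?thesis
    unfolding poisson_sine_kernel_def[abs_def] by (intro continuous_intros) auto
qed

lemma has_integral_poisson_sine_kernel:
  assumes "\<bar>c\<bar> < 1"
  shows "(poisson_sine_kernel c m has_integral integral {a..b} (poisson_sine_kernel c m)) {a..b}"
  using assms by (intro integrable_integral integrable_continuous_real continuous_intros)

lemma poisson_sine_kernel_recurrence:
  assumes c: "\<bar>c\<bar> < 1" and m: "m \<ge> 1"
  shows "(1 + c^2) * poisson_sine_kernel c m x
           - c * (poisson_sine_kernel c (m + 1) x + poisson_sine_kernel c (m - 1) x)
         = sin x * sin (real m * x)"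
proof -
  have D: "poisson_denom c x \<noteq> 0" using poisson_denom_pos[OF c, of x] by simp
  have "real (m + 1) * x = real m * x + x" "real (m - 1) * x = real m * x - x"
    using m by (auto simp: algebra_simps of_nat_diff)
  then have "sin (real (m + 1) * x) + sin (real (m - 1) * x) = 2 * sin (real m * x) * cos x"
    by (simp add: sin_add sin_diff)
  then have "(1 + c^2) * sin (real m * x) - c * (sin (real (m + 1) * x) + sin (real (m - 1) * x))
      = poisson_denom c x * sin (real m * x)"
    unfolding poisson_denom_def by (simp add: algebra_simps)
  then show ?thesis
    using D unfolding poisson_sine_kernel_def by (simp add: field_simps)
qed

lemma integral_poisson_sine_kernel_recurrence:
  assumes c: "\<bar>c\<bar> < 1" and m: "m \<ge> 1"
  shows "(1 + c^2) * integral {0..pi} (poisson_sine_kernel c m)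
           - c * (integral {0..pi} (poisson_sine_kernel c (m + 1))
                  + integral {0..pi} (poisson_sine_kernel c (m - 1)))
         = (if m = 1 then pi/2 else 0)"
proof -
  have "((\<lambda>x. (1 + c^2) * poisson_sine_kernel c m x
            - c * (poisson_sine_kernel c (m + 1) x + poisson_sine_kernel c (m - 1) x))
        has_integral (1 + c^2) * integral {0..pi} (poisson_sine_kernel c m)
           - c * (integral {0..pi} (poisson_sine_kernel c (m + 1))
                  + integral {0..pi} (poisson_sine_kernel c (m - 1)))) {0..pi}"
    using c by (intro has_integral_diff has_integral_mult_right has_integral_add
        has_integral_poisson_sine_kernel)
  then show ?thesis
    unfolding poisson_sine_kernel_recurrence[OF c m]
    using has_integral_sin_mult_sin[OF m] by (rule has_integral_unique)
qed

lemma integral_poisson_sine_kernel_1: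
  assumes c: "\<bar>c\<bar> < 1" and "c \<noteq> 0"
  shows "integral {0..pi} (poisson_sine_kernel c 1) = pi/2"
proof -
  \<comment> \<open>\<open>4 c\<^sup>2 sin\<^sup>2 x = (1 + c\<^sup>2 + 2 c cos x) poisson_denom c x - (1 - c\<^sup>2)\<^sup>2\<close>\<close>
  define \<Phi> where "\<Phi> x = x + 2 * arctan (c * sin x / (1 - c * cos x))" for x
  define G where "G x = (- (1 - c^2) * \<Phi> x + (1 + c^2) * x + 2 * c * sin x) / (4 * c^2)" for x
  have "(G has_real_derivative poisson_sine_kernel c 1 x) (at x within {0..pi})" for x
  proof -
    have D: "poisson_denom c x \<noteq> 0" using poisson_denom_pos[OF c, of x] by simp
    have "(- (1 - c^2) * ((1 - c^2) / poisson_denom c x) + (1 + c^2) + 2 * c * cos x)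
          * poisson_denom c x = 4 * c^2 * (sin x * sin x)"
      using D unfolding poisson_denom_def
      by (simp add: field_simps power2_eq_square sin_squared_eq[unfolded power2_eq_square])
    then have "(- (1 - c^2) * ((1 - c^2) / poisson_denom c x) + (1 + c^2) + 2 * c * cos x) / (4 * c^2)
        = poisson_sine_kernel c 1 x"
      using D \<open>c \<noteq> 0\<close> unfolding poisson_sine_kernel_def by (simp add: field_simps)
    moreover have "(G has_real_derivative
        (- (1 - c^2) * ((1 - c^2) / poisson_denom c x) + (1 + c^2) + 2 * c * cos x) / (4 * c^2))
        (at x within {0..pi})"
      unfolding G_def[abs_def]
      using \<open>c \<noteq> 0\<close> D
      by (auto intro!: derivative_eq_intros has_real_derivative_poisson_arctan[OF c, folded \<Phi>_def])
        (simp add: field_simps power2_eq_square power4_eq_xxxx)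
    ultimately show ?thesis by simp
  qed
  from has_integral_real_antiderivative[of 0 pi G, OF _ this]
  have "(poisson_sine_kernel c 1 has_integral G pi - G 0) {0..pi}" by simp
  moreover have "G pi - G 0 = pi/2"
    using \<open>c \<noteq> 0\<close> by (simp add: G_def \<Phi>_def field_simps power2_eq_square)
  ultimately show ?thesis by (simp add: integral_unique)
qed

lemma integral_poisson_sine_kernel:
  assumes c: "\<bar>c\<bar> < 1" and m: "m \<ge> 1"
  shows "integral {0..pi} (poisson_sine_kernel c m) = pi/2 * c^(m - 1)"
proof (cases "c = 0")
  case True
  then have "poisson_sine_kernel c m = (\<lambda>x. sin x * sin (real m * x))"
    by (simp add: poisson_sine_kernel_def poisson_denom_def fun_eq_iff)
  with has_integral_sin_mult_sin[OF m] True m show ?thesis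
    by (simp add: integral_unique)
next
  case False
  define p where "p k = integral {0..pi} (poisson_sine_kernel c k)" for k
  have "poisson_sine_kernel c 0 = (\<lambda>_. 0)" by (simp add: poisson_sine_kernel_def fun_eq_iff)
  then have p0: "p 0 = 0" by (simp add: p_def)
  have p1: "p 1 = pi/2" unfolding p_def by (rule integral_poisson_sine_kernel_1[OF c False])
  have recurrence: "(1 + c^2) * p (k + 1) - c * (p (k + 2) + p k) = (if k = 0 then pi/2 else 0)" for k
    using integral_poisson_sine_kernel_recurrence[OF c, of "k + 1"]
    by (simp add: p_def numeral_2_eq_2)
  have "p (k + 1) = pi/2 * c^k \<and> p (k + 2) = pi/2 * c^(k + 1)" for k
  proof (induction k)
    case 0
    have "(1 + c^2) * p 1 - c * p 2 = pi/2" using recurrence[of 0] p0 by (simp add: numeral_2_eq_2)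
    then have "c * p 2 = c * (pi/2 * c)" using p1 by algebra
    with False p1 show ?case by (simp add: numeral_2_eq_2)
  next
    case (Suc k)
    have "(1 + c^2) * p (k + 2) - c * (p (k + 3) + p (k + 1)) = 0"
      using recurrence[of "k + 1"] by (simp add: numeral_eq_Suc)
    then have "c * p (k + 3) = (1 + c^2) * p (k + 2) - c * p (k + 1)" by (simp add: algebra_simps)
    also have "\<dots> = c * (pi/2 * c^(k + 2))"
      using Suc.IH by (simp add: algebra_simps power2_eq_square)
    finally have "c * p (k + 3) = c * (pi/2 * c^(k + 2))" .
    with False Suc.IH show ?case by (simp add: numeral_eq_Suc)
  qed
  from this[of "m - 1"] m show ?thesis by (simp add: p_def)
qed

lemma poisson_sine_kernel_reflect:
  assumes "odd m"
  shows "poisson_sine_kernel c m (pi - x) = poisson_sine_kernel (- c) m x"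
proof -
  have "sin (real m * (pi - x)) = sin (real m * pi - real m * x)" by (simp add: algebra_simps)
  also have "\<dots> = sin (real m * x)" using assms by (simp add: sin_diff)
  finally show ?thesis by (simp add: poisson_sine_kernel_def poisson_denom_def)
qed

lemma integral_poisson_sine_kernel_halves:
  assumes c: "\<bar>c\<bar> < 1" and m: "odd m"
  shows "integral {0..pi/2} (poisson_sine_kernel c m) + integral {0..pi/2} (poisson_sine_kernel (- c) m)
       = integral {0..pi} (poisson_sine_kernel c m)"
proof -
  let ?K = "poisson_sine_kernel c m"
  have "((\<lambda>x. (-1) *\<^sub>R ?K (pi - x)) has_integral
      integral {pi - 0..pi - pi/2} ?K - integral {pi - pi/2..pi - 0} ?K) {0..pi/2}"
    by (rule has_integral_substitution_general[of "{}" 0 "pi/2" "\<lambda>x. pi - x" 0 pi ?K "\<lambda>_. -1"])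
      (use c in \<open>auto intro!: derivative_eq_intros continuous_intros\<close>)
  then have "((\<lambda>x. - poisson_sine_kernel (- c) m x) has_integral - integral {pi/2..pi} ?K) {0..pi/2}"
    by (simp add: poisson_sine_kernel_reflect[OF m])
  then have "(poisson_sine_kernel (- c) m has_integral integral {pi/2..pi} ?K) {0..pi/2}"
    by (simp add: has_integral_neg_iff)
  moreover have "integral {0..pi/2} ?K + integral {pi/2..pi} ?K = integral {0..pi} ?K"
    using c by (intro Henstock_Kurzweil_Integration.integral_combine integrable_continuous_real
        continuous_intros) auto
  ultimately show ?thesis by (simp add: integral_unique)
qed


fun chebyshev :: "nat \<Rightarrow> 'a::comm_ring_1 poly" where
  "chebyshev 0 = 1"
| "chebyshev (Suc 0) = [:0, 1:]"
| "chebyshev (Suc (Suc n)) = [:0, 2:] * chebyshev (Suc n) - chebyshev n"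

lemma degree_chebyshev: "degree (chebyshev n :: 'a::comm_ring_1 poly) \<le> n"
proof (induction n rule: chebyshev.induct)
  case (3 n)
  have "degree ([:0, 2:] * chebyshev (Suc n) :: 'a poly) \<le> Suc (Suc n)"
    using 3(1) degree_smult_le[of 2 "chebyshev (Suc n) :: 'a poly"] by auto
  with 3(2) show ?case by (simp add: degree_diff_le)
qed simp_all

lemma poly_chebyshev_cos:
  fixes z :: "'a::{real_normed_field, banach}"
  shows "poly (chebyshev n) (cos z) = cos (of_nat n * z)"
proof (induction n rule: chebyshev.induct)
  case (3 n)
  have "cos (of_nat (Suc (Suc n)) * z) = cos (of_nat (Suc n) * z + z)"
    "cos (of_nat n * z) = cos (of_nat (Suc n) * z - z)"
    by (simp_all add: algebra_simps)
  then have "cos (of_nat (Suc (Suc n)) * z) = 2 * cos z * cos (of_nat (Suc n) * z) - cos (of_nat n * z)"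
    by (simp add: cos_add cos_diff)
  with 3 show ?case by simp
qed simp_all

lemma poly_pderiv_chebyshev_cos:
  fixes z :: "'a::{real_normed_field, banach}"
  shows "poly (pderiv (chebyshev n)) (cos z) * sin z = of_nat n * sin (of_nat n * z)"
proof -
  have "((\<lambda>z. poly (chebyshev n) (cos z)) has_field_derivative
          poly (pderiv (chebyshev n)) (cos z) * - sin z) (at z)"
    by (rule DERIV_chain2[OF poly_DERIV DERIV_cos])
  moreover have "((\<lambda>z. poly (chebyshev n) (cos z)) has_field_derivative
          - sin (of_nat n * z) * of_nat n) (at z)"
    unfolding poly_chebyshev_cos by (auto intro!: derivative_eq_intros)
  ultimately show ?thesis
    using DERIV_unique by (fastforce simp: algebra_simps)
qed

lemma poly_eq_mult_synthetic_div:
  fixes p :: "'a::comm_ring_1 poly"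
  assumes "poly p a = 0"
  shows "poly p w = (w - a) * poly (synthetic_div p a) w"
proof -
  have "poly ([:-a, 1:] * synthetic_div p a + [:poly p a:]) w = poly p w"
    by (simp only: synthetic_div_correct')
  with assms show ?thesis by (simp add: algebra_simps)
qed

lemma poly_synthetic_div_root:
  fixes p :: "'a::idom poly"
  assumes "poly p a = 0"
  shows "poly (synthetic_div p a) a = poly (pderiv p) a"
proof -
  have "p = [:-a, 1:] * synthetic_div p a"
    using synthetic_div_correct'[of a p] assms by simp
  then have "pderiv p = [:-a, 1:] * pderiv (synthetic_div p a) + synthetic_div p a * pderiv [:-a, 1:]"
    by (metis pderiv_mult)
  then show ?thesis by (simp add: pderiv_pCons)
qed

text \<open>The polynomial \<open>q\<close> in the proof has degree below \<open>n\<close> and takes the value \<open>1\<close>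
  at all \<open>n\<close> roots, so it is the constant \<open>1\<close>.\<close>

lemma poly_mult_sum_partial_fractions:
  fixes p :: "'a::field poly" and r :: "nat \<Rightarrow> 'a"
  assumes deg: "degree p \<le> n" and n: "n > 0" and inj: "inj_on r {..<n}"
    and roots: "\<And>k. k < n \<Longrightarrow> poly p (r k) = 0"
    and simple: "\<And>k. k < n \<Longrightarrow> poly (pderiv p) (r k) \<noteq> 0"
    and w: "w \<notin> r ` {..<n}"
  shows "poly p w * (\<Sum>k<n. 1 / (poly (pderiv p) (r k) * (w - r k))) = 1"
proof -
  define q where "q = (\<Sum>k<n. smult (1 / poly (pderiv p) (r k)) (synthetic_div p (r k)))"
  have "degree q \<le> n - 1"
    unfolding q_def using deg
    by (intro degree_sum_le) (auto intro: order_trans[OF degree_smult_le] simp: degree_synthetic_div)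
  then have deg_q: "degree q < card (r ` {..<n})"
    using inj n by (simp add: card_image)
  have "poly q (r j) = 1" if "j < n" for j
  proof -
    have "poly (synthetic_div p (r k)) (r j) = 0" if "k < n" "k \<noteq> j" for k
    proof -
      have "r j \<noteq> r k" using inj that \<open>j < n\<close> by (auto dest: inj_onD)
      with poly_eq_mult_synthetic_div[OF roots[OF \<open>k < n\<close>], of "r j"] roots[OF \<open>j < n\<close>]
      show ?thesis by simp
    qed
    then have "poly q (r j) = (\<Sum>k<n. if k = j then 1 else 0)"
      unfolding q_def poly_sum
      by (intro sum.cong) (use simple poly_synthetic_div_root[OF roots] in auto)
    with that show ?thesis by simp
  qed
  then have "q = 1"
    using deg_q by (intro poly_eqI_degree[of "r ` {..<n}"]) auto
  then have "1 = poly q w" by simp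
  also have "\<dots> = (\<Sum>k<n. 1 / poly (pderiv p) (r k) * poly (synthetic_div p (r k)) w)"
    unfolding q_def poly_sum by simp
  also have "\<dots> = (\<Sum>k<n. poly p w * (1 / (poly (pderiv p) (r k) * (w - r k))))"
  proof (intro sum.cong refl)
    fix k assume "k \<in> {..<n}"
    then have k: "k < n" and "w - r k \<noteq> 0" using w by auto
    then show "1 / poly (pderiv p) (r k) * poly (synthetic_div p (r k)) w
        = poly p w * (1 / (poly (pderiv p) (r k) * (w - r k)))"
      unfolding poly_eq_mult_synthetic_div[OF roots[OF k], of w] using simple[OF k] by simp
  qed
  finally show ?thesis by (simp add: sum_distrib_left)
qed


definition chebyshev_angle :: "nat \<Rightarrow> nat \<Rightarrow> real" where
  "chebyshev_angle n k = pi * (2 * real k + 1) / (2 * real n)"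

lemma chebyshev_angle_bounds:
  assumes "k < n" shows "0 < chebyshev_angle n k" "chebyshev_angle n k < pi"
proof -
  have "(2 * real k + 1) / (2 * real n) < 1" using assms by simp
  then have "pi * ((2 * real k + 1) / (2 * real n)) < pi * 1"
    by (intro mult_strict_left_mono) auto
  with assms show "0 < chebyshev_angle n k" "chebyshev_angle n k < pi"
    unfolding chebyshev_angle_def by simp_all
qed

lemma of_nat_mult_chebyshev_angle:
  assumes "n > 0" shows "real n * chebyshev_angle n k = real k * pi + pi/2"
  using assms unfolding chebyshev_angle_def by (simp add: field_simps)

lemma chebyshev_angle_reflect:
  assumes "k < n" shows "chebyshev_angle n (n - Suc k) = pi - chebyshev_angle n k"
  using assms unfolding chebyshev_angle_def by (simp add: of_nat_diff field_simps)

lemma abs_cos_chebyshev_angle_less_1: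
  assumes "k < n" shows "\<bar>cos (chebyshev_angle n k)\<bar> < 1"
proof -
  have "cos pi < cos (chebyshev_angle n k)"
    using chebyshev_angle_bounds[OF assms] by (intro cos_monotone_0_pi) auto
  moreover have "cos (chebyshev_angle n k) < cos 0"
    using chebyshev_angle_bounds[OF assms] by (intro cos_monotone_0_pi) auto
  ultimately show ?thesis by auto
qed

lemma inj_on_cos_chebyshev_angle: "inj_on (\<lambda>k. cos (chebyshev_angle n k)) {..<n}"
proof (rule inj_onI)
  fix k l assume k: "k \<in> {..<n}" and l: "l \<in> {..<n}"
    and "cos (chebyshev_angle n k) = cos (chebyshev_angle n l)"
  moreover have "0 \<le> chebyshev_angle n k" "chebyshev_angle n k \<le> pi" "0 \<le> chebyshev_angle n l" "chebyshev_angle n l \<le> pi"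
    using chebyshev_angle_bounds[of k n] chebyshev_angle_bounds[of l n] k l by auto
  ultimately have "real n * chebyshev_angle n k = real n * chebyshev_angle n l" by (simp add: cos_inj_pi)
  moreover have "n > 0" using k by simp
  ultimately show "k = l" unfolding of_nat_mult_chebyshev_angle[OF \<open>n > 0\<close>] by simp
qed

lemma poly_chebyshev_at_node:
  assumes "n > 0"
  shows "poly (chebyshev n) (complex_of_real (cos (chebyshev_angle n k))) = 0"
proof -
  have "poly (chebyshev n) (complex_of_real (cos (chebyshev_angle n k)))
      = complex_of_real (cos (real n * chebyshev_angle n k))"
    using poly_chebyshev_cos[of n "complex_of_real (chebyshev_angle n k)"] by (simp flip: cos_of_real)
  also have "cos (real n * chebyshev_angle n k) = 0"
    unfolding of_nat_mult_chebyshev_angle[OF assms] by (simp add: cos_add)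
  finally show ?thesis by simp
qed

lemma poly_pderiv_chebyshev_at_node:
  assumes "k < n"
  shows "poly (pderiv (chebyshev n)) (complex_of_real (cos (chebyshev_angle n k)))
       = complex_of_real (real n * (-1)^k / sin (chebyshev_angle n k))"
proof -
  have "sin (chebyshev_angle n k) > 0"
    using chebyshev_angle_bounds[OF assms] by (intro sin_gt_zero) auto
  moreover have "sin (real n * chebyshev_angle n k) = (-1)^k"
    using assms by (simp add: of_nat_mult_chebyshev_angle sin_add)
  moreover have "poly (pderiv (chebyshev n)) (complex_of_real (cos (chebyshev_angle n k)))
      * complex_of_real (sin (chebyshev_angle n k)) = complex_of_real (real n * sin (real n * chebyshev_angle n k))"
    using poly_pderiv_chebyshev_cos[of n "complex_of_real (chebyshev_angle n k)"]
    by (simp flip: cos_of_real sin_of_real)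
  ultimately show ?thesis by (simp add: field_simps)
qed

lemma poly_chebyshev_mult_sum_partial_fractions:
  assumes n: "n > 0" and w: "w \<notin> (\<lambda>k. complex_of_real (cos (chebyshev_angle n k))) ` {..<n}"
  shows "poly (chebyshev n) w * (\<Sum>k<n. complex_of_real ((-1)^k * sin (chebyshev_angle n k) / real n)
                                          / (w - complex_of_real (cos (chebyshev_angle n k)))) = 1"
proof -
  have inj: "inj_on (\<lambda>k. complex_of_real (cos (chebyshev_angle n k))) {..<n}"
    using inj_on_cos_chebyshev_angle by (auto simp: inj_on_def)
  have "sin (chebyshev_angle n k) \<noteq> 0" if "k < n" for k
    using chebyshev_angle_bounds[OF that] by (intro sin_gt_zero[THEN less_imp_neq, symmetric]) auto
  with n have simple: "poly (pderiv (chebyshev n)) (complex_of_real (cos (chebyshev_angle n k))) \<noteq> 0"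
    if "k < n" for k
    using that by (simp add: poly_pderiv_chebyshev_at_node)
  have "1 / (poly (pderiv (chebyshev n)) (complex_of_real (cos (chebyshev_angle n k)))
             * (w - complex_of_real (cos (chebyshev_angle n k))))
      = complex_of_real ((-1)^k * sin (chebyshev_angle n k) / real n) / (w - complex_of_real (cos (chebyshev_angle n k)))"
    if "k < n" for k
    using that by (cases "even k") (simp_all add: poly_pderiv_chebyshev_at_node)
  then show ?thesis
    using poly_mult_sum_partial_fractions[OF degree_chebyshev n inj _ simple w]
      poly_chebyshev_at_node[OF n] by simp
qed

lemma Im_of_real_divide_cis_diff:
  "Im (complex_of_real r / (cis (- x) - complex_of_real c)) = r * sin x / poisson_denom c x"
  by (simp add: Im_divide poisson_denom_eq_sum_squares')

definition chebyshev_kernel :: "nat \<Rightarrow> real \<Rightarrow> real" where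
  "chebyshev_kernel n x = (\<Sum>k<n. (-1)^k * sin (chebyshev_angle n k)
                              * (sin x / poisson_denom (cos (chebyshev_angle n k)) x)) / (2 * real n)"

lemma continuous_on_chebyshev_kernel:
  assumes "n > 0" shows "continuous_on U (chebyshev_kernel n)"
proof -
  have "poisson_denom (cos (chebyshev_angle n k)) x \<noteq> 0" if "k < n" for k x
    using poisson_denom_pos[OF abs_cos_chebyshev_angle_less_1[OF that], of x] by simp
  with assms show ?thesis
    unfolding chebyshev_kernel_def[abs_def] by (intro continuous_intros) auto
qed

lemma Im_inverse_poly_chebyshev_cis:
  assumes n: "n > 0"
  shows "Im (1 / poly (chebyshev n) (cis (- x))) = 2 * chebyshev_kernel n x"
proof -
  define c where "c k = cos (chebyshev_angle n k)" for k
  define \<Sigma> where "\<Sigma> = (\<Sum>k<n. complex_of_real ((-1)^k * sin (chebyshev_angle n k) / real n)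
                                / (cis (- x) - complex_of_real (c k)))"
  have "cis (- x) \<notin> (\<lambda>k. complex_of_real (c k)) ` {..<n}"
    \<comment> \<open>the nodes are real and lie in \<open>(-1, 1)\<close>, while \<open>cis (- x)\<close> is real only at \<open>\<plusminus>1\<close>\<close>
  proof
    assume "cis (- x) \<in> (\<lambda>k. complex_of_real (c k)) ` {..<n}"
    then obtain k where "k < n" "cos x = c k" "sin x = 0"
      by (auto simp: complex_eq_iff)
    with sin_cos_squared_add[of x] have "\<bar>c k\<bar> = 1" by (simp add: abs_square_eq_1)
    with abs_cos_chebyshev_angle_less_1[OF \<open>k < n\<close>] show False by (simp add: c_def)
  qed
  then have "poly (chebyshev n) (cis (- x)) * \<Sigma> = 1"
    using poly_chebyshev_mult_sum_partial_fractions[OF n] unfolding \<Sigma>_def c_def by simp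
  moreover from this have "poly (chebyshev n) (cis (- x)) \<noteq> 0" by auto
  ultimately have "1 / poly (chebyshev n) (cis (- x)) = \<Sigma>"
    by (simp add: field_simps)
  also have "Im \<Sigma> = (\<Sum>k<n. (-1)^k * sin (chebyshev_angle n k) / real n * (sin x / poisson_denom (c k) x))"
    unfolding \<Sigma>_def Im_sum Im_of_real_divide_cis_diff by simp
  also have "\<dots> = (\<Sum>k<n. (-1)^k * sin (chebyshev_angle n k) * (sin x / poisson_denom (c k) x)) / real n"
    by (simp add: sum_divide_distrib ac_simps)
  also have "\<dots> = 2 * chebyshev_kernel n x"
    using n by (simp add: chebyshev_kernel_def c_def)
  finally show ?thesis .
qed

lemma cos_Complex: "cos (Complex a b) = Complex (cos a * cosh b) (- (sin a * sinh b))"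
  by (simp add: complex_eq_iff Re_cos Im_cos cosh_def sinh_def field_simps)

lemma Im_inverse_cos_Complex:
  "Im (1 / cos (Complex a b)) = 2 * (sin a * sinh b) / (cos (2 * a) + cosh (2 * b))"
proof -
  have "Im (1 / cos (Complex a b)) = sin a * sinh b / ((cos a * cosh b)^2 + (sin a * sinh b)^2)"
    by (simp add: cos_Complex Im_divide)
  also have "(cos a * cosh b)^2 + (sin a * sinh b)^2
      = (cos a)^2 * (cosh b)^2 + (1 - (cos a)^2) * ((cosh b)^2 - 1)"
    by (simp add: power_mult_distrib sin_squared_eq sinh_square_eq)
  also have "\<dots> = (cos (2 * a) + cosh (2 * b)) / 2"
    unfolding cos_double_cos cosh_double_cosh by (simp add: algebra_simps)
  finally show ?thesis by simp
qed

lemma cos_Complex_arcsin_arsinh: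
  assumes "0 \<le> t" "t \<le> 1"
  shows "cos (Complex (arcsin (sqrt t)) (arsinh (sqrt t))) = cis (- arcsin t)"
proof -
  have "-1 \<le> sqrt t" using real_sqrt_ge_zero[OF assms(1)] by linarith
  moreover have "sqrt t \<le> 1" using assms by simp
  ultimately have "sin (arcsin (sqrt t)) = sqrt t" "cos (arcsin (sqrt t)) = sqrt (1 - t)"
    using assms by (simp_all add: sin_arcsin cos_arcsin)
  moreover have "sqrt (1 - t) * sqrt (t + 1) = sqrt (1 - t^2)"
    by (simp add: real_sqrt_mult[symmetric] power2_eq_square algebra_simps)
  ultimately show ?thesis
    using assms by (simp add: cos_Complex complex_eq_iff cos_arcsin sin_arcsin cosh_arsinh_real)
qed

lemma integrand_eq_chebyshev_kernel:
  assumes "n > 0" "0 \<le> t" "t \<le> 1"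
  shows "sin (real n * arcsin (sqrt t)) * sinh (real n * arsinh (sqrt t))
           / (cos (2 * real n * arcsin (sqrt t)) + cosh (2 * real n * arsinh (sqrt t)))
         = chebyshev_kernel n (arcsin t)"
proof -
  define z where "z = Complex (arcsin (sqrt t)) (arsinh (sqrt t))"
  have "of_nat n * z = Complex (real n * arcsin (sqrt t)) (real n * arsinh (sqrt t))"
    by (simp add: z_def complex_eq_iff)
  then have Im_eq: "Im (1 / cos (of_nat n * z)) = 2 * (sin (real n * arcsin (sqrt t)) * sinh (real n * arsinh (sqrt t))
           / (cos (2 * real n * arcsin (sqrt t)) + cosh (2 * real n * arsinh (sqrt t))))"
    by (simp add: Im_inverse_cos_Complex mult.assoc)
  then have "sin (real n * arcsin (sqrt t)) * sinh (real n * arsinh (sqrt t))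
           / (cos (2 * real n * arcsin (sqrt t)) + cosh (2 * real n * arsinh (sqrt t)))
         = Im (1 / cos (of_nat n * z)) / 2"
    using Im_eq by linarith
  also have "\<dots> = Im (1 / poly (chebyshev n) (cis (- arcsin t))) / 2"
    using cos_Complex_arcsin_arsinh[OF assms(2,3)] by (simp add: z_def flip: poly_chebyshev_cos)
  also have "\<dots> = chebyshev_kernel n (arcsin t)"
    by (simp add: Im_inverse_poly_chebyshev_cis[OF assms(1)])
  finally show ?thesis .
qed

lemma has_integral_chebyshev_kernel_mult_sin:
  "((\<lambda>x. chebyshev_kernel n x * sin (real m * x)) has_integral
     (\<Sum>k<n. (-1)^k * sin (chebyshev_angle n k) * integral {0..pi/2} (poisson_sine_kernel (cos (chebyshev_angle n k)) m))
       / (2 * real n)) {0..pi/2}"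
proof -
  have "chebyshev_kernel n x * sin (real m * x)
      = (\<Sum>k<n. (-1)^k * sin (chebyshev_angle n k) * poisson_sine_kernel (cos (chebyshev_angle n k)) m x) / (2 * real n)"
    for x
    by (simp add: chebyshev_kernel_def poisson_sine_kernel_def sum_distrib_right mult.assoc)
  moreover have "((\<lambda>x. \<Sum>k<n. (-1)^k * sin (chebyshev_angle n k) * poisson_sine_kernel (cos (chebyshev_angle n k)) m x)
      has_integral (\<Sum>k<n. (-1)^k * sin (chebyshev_angle n k)
                          * integral {0..pi/2} (poisson_sine_kernel (cos (chebyshev_angle n k)) m))) {0..pi/2}"
    by (intro has_integral_sum has_integral_mult_right has_integral_poisson_sine_kernel
        abs_cos_chebyshev_angle_less_1) auto
  ultimately show ?thesis
    by (simp add: has_integral_divide)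
qed

lemma chebyshev_angle_reflect_odd:
  assumes "odd n" "k < n"
  shows "(-1::real)^(n - Suc k) * sin (chebyshev_angle n (n - Suc k)) = (-1)^k * sin (chebyshev_angle n k)"
    and "cos (chebyshev_angle n (n - Suc k)) = - cos (chebyshev_angle n k)"
proof -
  have "even (n - Suc k) \<longleftrightarrow> even k" using assms by presburger
  then have "(-1::real)^(n - Suc k) = (-1)^k" by (simp add: minus_one_power_iff)
  then show "(-1::real)^(n - Suc k) * sin (chebyshev_angle n (n - Suc k)) = (-1)^k * sin (chebyshev_angle n k)"
    using assms by (simp add: chebyshev_angle_reflect)
  show "cos (chebyshev_angle n (n - Suc k)) = - cos (chebyshev_angle n k)"
    using assms by (simp add: chebyshev_angle_reflect)
qed

text \<open>Pairing the node \<open>k\<close> with its mirror image \<open>n - 1 - k\<close> turns each half-range moment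
  into the full-range moment on \<open>[0, pi]\<close>.\<close>

lemma sum_chebyshev_half_moments:
  assumes n: "odd n" and m: "odd m"
  shows "(\<Sum>k<n. (-1)^k * sin (chebyshev_angle n k) * integral {0..pi/2} (poisson_sine_kernel (cos (chebyshev_angle n k)) m))
       = pi/4 * (\<Sum>k<n. (-1)^k * sin (chebyshev_angle n k) * cos (chebyshev_angle n k) ^ (m - 1))"
proof -
  define a where "a k = (-1::real)^k * sin (chebyshev_angle n k)" for k
  define Q where "Q c = integral {0..pi/2} (poisson_sine_kernel c m)" for c
  have "(\<Sum>k<n. a k * Q (cos (chebyshev_angle n k)))
      = (\<Sum>k<n. a (n - Suc k) * Q (cos (chebyshev_angle n (n - Suc k))))"
    by (rule sum.nat_diff_reindex[symmetric])
  also have "\<dots> = (\<Sum>k<n. a k * Q (- cos (chebyshev_angle n k)))"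
    using chebyshev_angle_reflect_odd[OF n] by (intro sum.cong) (auto simp: a_def)
  finally have "2 * (\<Sum>k<n. a k * Q (cos (chebyshev_angle n k)))
      = (\<Sum>k<n. a k * (Q (cos (chebyshev_angle n k)) + Q (- cos (chebyshev_angle n k))))"
    by (simp add: algebra_simps sum.distrib)
  also have "\<dots> = (\<Sum>k<n. a k * (pi/2 * cos (chebyshev_angle n k) ^ (m - 1)))"
    using m abs_cos_chebyshev_angle_less_1
    by (intro sum.cong) (auto simp: Q_def integral_poisson_sine_kernel_halves integral_poisson_sine_kernel
        odd_pos Suc_leI)
  also have "\<dots> = pi/2 * (\<Sum>k<n. a k * cos (chebyshev_angle n k) ^ (m - 1))"
    by (simp add: sum_distrib_left mult_ac)
  finally show ?thesis
    unfolding a_def Q_def by linarith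
qed

lemma sum_chebyshev_angle_eq_S:
  assumes n: "odd n" and m: "odd m" "m > 1"
  shows "(\<Sum>k<n. (-1)^k * sin (chebyshev_angle n k) * cos (chebyshev_angle n k) ^ (m - 1)) = 2 * S n m"
proof -
  define h where "h = (n - 1) div 2"
  have nh: "n = 2 * h + 1" using n unfolding h_def by presburger
  define f where "f k = (-1::real)^k * sin (chebyshev_angle n k) * cos (chebyshev_angle n k) ^ (m - 1)" for k
  have S_eq: "S n m = (\<Sum>k\<le>h. f k)"
    unfolding S_def f_def chebyshev_angle_def h_def by (simp add: atLeast0AtMost)
  have f_reflect: "f (n - Suc k) = f k" if "k < n" for k
    using m chebyshev_angle_reflect_odd[OF n that] by (simp add: f_def power_minus_even)
  have middle: "chebyshev_angle n h = pi/2" unfolding chebyshev_angle_def nh by (simp add: field_simps)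
  have "cos (chebyshev_angle n h) = 0" unfolding middle by simp
  then have "f h = 0" using m by (simp add: f_def)
  have split: "{..<n} = {..h} \<union> {h+1..<n}" using nh by auto
  have "(\<Sum>k<n. f k) = (\<Sum>k\<le>h. f k) + (\<Sum>k\<in>{h+1..<n}. f k)"
    unfolding split by (rule sum.union_disjoint) auto
  also have "(\<Sum>k\<in>{h+1..<n}. f k) = (\<Sum>k<h. f k)"
    by (rule sum.reindex_bij_witness[where i="\<lambda>k. n - Suc k" and j="\<lambda>k. n - Suc k"])
      (use nh f_reflect in auto)
  also have "\<dots> = (\<Sum>k\<le>h. f k)"
    using \<open>f h = 0\<close> by (simp flip: lessThan_Suc_atMost)
  finally show ?thesis unfolding S_eq f_def by simp
qed

lemma has_integral_arcsin_substitution: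
  assumes "continuous_on {0..pi/2} h" and "(h has_integral I) {0..pi/2}"
  shows "((\<lambda>t. h (arcsin t) / sqrt (1 - t^2)) has_integral I) {0..1}"
proof -
  have "((\<lambda>t. inverse (sqrt (1 - t^2)) *\<^sub>R h (arcsin t)) has_integral
      integral {arcsin 0..arcsin 1} h - integral {arcsin 1..arcsin 0} h) {0..1}"
  proof (rule has_integral_substitution_general[of "{1}" 0 1 arcsin 0 "pi/2" h])
    show "arcsin ` {0..1} \<subseteq> {0..pi/2}" using arcsin_nonneg arcsin_ubound by fastforce
    show "continuous_on {0..1} arcsin"
      by (rule continuous_on_subset[OF continuous_on_arcsin']) auto
    fix x :: real assume "x \<in> {0..1} - {1}"
    then have "-1 < x" "x < 1" by auto
    from DERIV_arcsin[OF this]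
    show "(arcsin has_real_derivative inverse (sqrt (1 - x^2))) (at x within {0..1})"
      by (rule has_field_derivative_at_within)
  qed (use assms(1) in auto)
  moreover have "(\<lambda>t. inverse (sqrt (1 - t^2)) *\<^sub>R h (arcsin t)) = (\<lambda>t. h (arcsin t) / sqrt (1 - t^2))"
    by (simp add: fun_eq_iff divide_inverse)
  moreover have "integral {arcsin 0..arcsin 1} h - integral {arcsin 1..arcsin 0} h = I"
    using integral_unique[OF assms(2)] by simp
  ultimately show ?thesis by simp
qed

theorem mainTheorem13:
  fixes n m :: nat
  assumes "n > 0" and "odd n" and "m > 1" and "odd m"
  shows "((\<lambda>t::real.
            (sin (real n * arcsin (sqrt t)) * sinh (real n * arsinh (sqrt t))
              / (cos (2 * real n * arcsin (sqrt t)) + cosh (2 * real n * arsinh (sqrt t))))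
            * (sin (real m * arcsin t) / sqrt (1 - t^2)))
          has_integral (pi / (4 * real n) * S n m)) {0..1}"
proof -
  define h where "h x = chebyshev_kernel n x * sin (real m * x)" for x
  have "(h has_integral pi / (4 * real n) * S n m) {0..pi/2}"
    using has_integral_chebyshev_kernel_mult_sin[of n m]
    unfolding h_def[abs_def] sum_chebyshev_half_moments[OF assms(2,4)] sum_chebyshev_angle_eq_S[OF assms(2,4,3)]
    by (simp add: field_simps)
  moreover have "continuous_on {0..pi/2} h"
    unfolding h_def[abs_def] using continuous_on_chebyshev_kernel[OF assms(1)]
    by (intro continuous_intros)
  ultimately have "((\<lambda>t. h (arcsin t) / sqrt (1 - t^2)) has_integral pi / (4 * real n) * S n m) {0..1}"
    by (intro has_integral_arcsin_substitution)
  then show ?thesis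
    by (rule has_integral_eq[rotated]) (simp add: h_def integrand_eq_chebyshev_kernel[OF assms(1)])
qed

end
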